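(* Let $r=\frac{e^2-1}{e^2+1}$ and let $\mathbb{D}_K(1)=\{x\in\mathbb{R}^2:|x|<r\}$ be the Klein unit disc. For $x\in\mathbb{D}_K(1)$ and $\xi\in T_x\mathbb{D}_K(1)\cong\mathbb{R}^2$, $\xi\neq0$, define $$\mathcal{F}(x,\xi)=\coth\big(d_K(x,\mathfrak{a})\big)\,\alpha_K(x,\xi),$$ where $\mathfrak{a}=\mathfrak{a}(x,\xi)$ is the unique point $x+s\xi$ with $s>0$ and $|x+s\xi|=r$, and set $\mathcal{F}(x,0)=0$. Then $\mathcal{F}=\alpha_F+\beta_F$ with $$\alpha_F(x,\xi)=\frac{\sqrt{(r^2-|x|^2)|\xi|^2+\langle x,\xi\rangle^2}}{r^2-|x|^2},\qquad \beta_F(x,\xi)=\frac{(1-r^2)\langle x,\xi\rangle}{(r^2-|x|^2)(1-|x|^2)}.$$ Moreover $\alpha_F$ is a Riemannian metric on $\mathbb{D}_K(1)$, $\beta_F=df$ is exact (hence closed) with $f(x)=\tfrac12\log\frac{1-|x|^2}{r^2-|x|^2}$, and $$\|\beta_F\|_{\alpha_F}^2=\frac{|x|^2(1-r^2)^2}{r^2(1-|x|^2)^2}<1\quad\text{on }\mathbb{D}_K(1),$$ so that $\mathcal{F}$ is a Randers metric on $\mathbb{D}_K(1)$ with closed $1$-form.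
   Context: $|\cdot|$ and $\langle\cdot,\cdot\rangle$ are the Euclidean norm and inner product on $\mathbb{R}^2$. The Klein distance on $\mathbb{D}_E(1)=\{|x|<1\}$ is $d_K(x,y)=\tfrac12\log\frac{|x-a||y-b|}{|y-a||x-b|}$ for $x\ne y$, where $a$ (resp. $b$) is the intersection of the Euclidean ray from $x$ through $y$ (resp. from $y$ through $x$) with the unit circle; $d_K(x,x)=0$. The Klein (Riemannian) metric on $\mathbb{D}_E(1)$ is $\alpha_K(x,\xi)=\frac{\sqrt{(1-|x|^2)|\xi|^2+\langle x,\xi\rangle^2}}{1-|x|^2}$. A Randers metric is $F=\alpha+\beta$ with $\alpha=\sqrt{a_{ij}(x)\xi^i\xi^j}$ Riemannian and $\beta=b_i(x)\xi^i$ a $1$-form with $\|\beta\|_\alpha^2=a^{ij}b_ib_j<1$. *)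

theory Defs
  imports "HOL-Analysis.Analysis"
begin

definition klein_r :: real where
  "klein_r = (exp 2 - 1) / (exp 2 + 1)"

definition ray_hit :: "real^2 \<Rightarrow> real^2 \<Rightarrow> real \<Rightarrow> real^2" where
  "ray_hit x v R = (THE p. \<exists>s>0. p = x + s *\<^sub>R v \<and> norm p = R)"

definition klein_dist :: "real^2 \<Rightarrow> real^2 \<Rightarrow> real" where
  "klein_dist x y =
     (if x = y then 0 else
        (let a = ray_hit x (y - x) 1; b = ray_hit y (x - y) 1
         in ln ((dist x a * dist y b) / (dist y a * dist x b)) / 2))"

definition alpha_K :: "real^2 \<Rightarrow> real^2 \<Rightarrow> real" where
  "alpha_K x \<xi> = sqrt ((1 - (norm x)\<^sup>2) * (norm \<xi>)\<^sup>2 + (x \<bullet> \<xi>)\<^sup>2) / (1 - (norm x)\<^sup>2)"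

definition coth :: "real \<Rightarrow> real" where
  "coth t = cosh t / sinh t"

definition FF :: "real^2 \<Rightarrow> real^2 \<Rightarrow> real" where
  "FF x \<xi> = (if \<xi> = 0 then 0 else coth (klein_dist x (ray_hit x \<xi> klein_r)) * alpha_K x \<xi>)"

definition alpha_F :: "real^2 \<Rightarrow> real^2 \<Rightarrow> real" where
  "alpha_F x \<xi> = sqrt ((klein_r\<^sup>2 - (norm x)\<^sup>2) * (norm \<xi>)\<^sup>2 + (x \<bullet> \<xi>)\<^sup>2) / (klein_r\<^sup>2 - (norm x)\<^sup>2)"

definition beta_F :: "real^2 \<Rightarrow> real^2 \<Rightarrow> real" where
  "beta_F x \<xi> = ((1 - klein_r\<^sup>2) * (x \<bullet> \<xi>)) / ((klein_r\<^sup>2 - (norm x)\<^sup>2) * (1 - (norm x)\<^sup>2))"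

definition f_pot :: "real^2 \<Rightarrow> real" where
  "f_pot x = ln ((1 - (norm x)\<^sup>2) / (klein_r\<^sup>2 - (norm x)\<^sup>2)) / 2"

fun C_k :: "nat \<Rightarrow> (real^2) set \<Rightarrow> (real^2 \<Rightarrow> real) \<Rightarrow> bool" where
  "C_k 0 S f = continuous_on S f"
| "C_k (Suc k) S f = (\<exists>D. (\<forall>x\<in>S. (f has_derivative D x) (at x)) \<and>
                          (\<forall>i. C_k k S (\<lambda>x. D x (axis i 1))))"

definition smooth_on :: "(real^2) set \<Rightarrow> (real^2 \<Rightarrow> real) \<Rightarrow> bool" where
  "smooth_on S f \<longleftrightarrow> (\<forall>k. C_k k S f)"

definition metric_coeffs :: "(real^2 \<Rightarrow> real^2 \<Rightarrow> real) \<Rightarrow> real^2 \<Rightarrow> real^2^2" where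
  "metric_coeffs \<alpha> x = (\<chi> i j. ((\<alpha> x (axis i 1 + axis j 1))\<^sup>2
                               - (\<alpha> x (axis i 1))\<^sup>2 - (\<alpha> x (axis j 1))\<^sup>2) / 2)"

definition form_coeffs :: "(real^2 \<Rightarrow> real^2 \<Rightarrow> real) \<Rightarrow> real^2 \<Rightarrow> real^2" where
  "form_coeffs \<beta> x = (\<chi> i. \<beta> x (axis i 1))"

definition riemannian_on :: "(real^2) set \<Rightarrow> (real^2 \<Rightarrow> real^2 \<Rightarrow> real) \<Rightarrow> bool" where
  "riemannian_on S \<alpha> \<longleftrightarrow>
     (\<forall>x\<in>S. \<forall>\<xi>. \<alpha> x \<xi> = sqrt (\<xi> \<bullet> (metric_coeffs \<alpha> x *v \<xi>))) \<and>
     (\<forall>x\<in>S. transpose (metric_coeffs \<alpha> x) = metric_coeffs \<alpha> x) \<and>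
     (\<forall>x\<in>S. \<forall>\<xi>. \<xi> \<noteq> 0 \<longrightarrow> \<xi> \<bullet> (metric_coeffs \<alpha> x *v \<xi>) > 0) \<and>
     (\<forall>i j. smooth_on S (\<lambda>x. metric_coeffs \<alpha> x $ i $ j))"

definition one_form_on :: "(real^2) set \<Rightarrow> (real^2 \<Rightarrow> real^2 \<Rightarrow> real) \<Rightarrow> bool" where
  "one_form_on S \<beta> \<longleftrightarrow>
     (\<forall>x\<in>S. \<forall>\<xi>. \<beta> x \<xi> = form_coeffs \<beta> x \<bullet> \<xi>) \<and>
     (\<forall>i. smooth_on S (\<lambda>x. form_coeffs \<beta> x $ i))"

definition form_norm_sq :: "(real^2 \<Rightarrow> real^2 \<Rightarrow> real) \<Rightarrow> (real^2 \<Rightarrow> real^2 \<Rightarrow> real) \<Rightarrow> real^2 \<Rightarrow> real" where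
  "form_norm_sq \<alpha> \<beta> x = form_coeffs \<beta> x \<bullet> (matrix_inv (metric_coeffs \<alpha> x) *v form_coeffs \<beta> x)"

definition closed_form_on :: "(real^2) set \<Rightarrow> (real^2 \<Rightarrow> real^2 \<Rightarrow> real) \<Rightarrow> bool" where
  "closed_form_on S \<beta> \<longleftrightarrow>
     (\<exists>D1 D2. \<forall>x\<in>S. ((\<lambda>y. form_coeffs \<beta> y $ 1) has_derivative D1 x) (at x) \<and>
                     ((\<lambda>y. form_coeffs \<beta> y $ 2) has_derivative D2 x) (at x) \<and>
                     D1 x (axis 2 1) = D2 x (axis 1 1))"

definition randers_on :: "(real^2) set \<Rightarrow> (real^2 \<Rightarrow> real^2 \<Rightarrow> real) \<Rightarrow>
    (real^2 \<Rightarrow> real^2 \<Rightarrow> real) \<Rightarrow> (real^2 \<Rightarrow> real^2 \<Rightarrow> real) \<Rightarrow> bool" where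
  "randers_on S F \<alpha> \<beta> \<longleftrightarrow>
     (\<forall>x\<in>S. \<forall>\<xi>. F x \<xi> = \<alpha> x \<xi> + \<beta> x \<xi>) \<and> riemannian_on S \<alpha> \<and> one_form_on S \<beta> \<and>
     (\<forall>x\<in>S. form_norm_sq \<alpha> \<beta> x < 1)"

end

theory Submission
  imports Defs
begin

text \<open>Along the ray \<open>x + s \<xi>\<close>, with \<open>p = \<langle>x,\<xi>\<rangle>\<close>, \<open>n = |\<xi>|\<^sup>2\<close> and \<open>m = |x|\<^sup>2\<close>, the parameters
  \<open>\<tau> < 0 < s < t\<close> at which the line meets the unit circle (\<open>\<tau>, t\<close>) and the circle of radius \<open>r\<close>
  (\<open>s\<close>) are roots of quadratics with discriminants \<open>a\<^sup>2 = p\<^sup>2 + n (1 - m)\<close> and \<open>b\<^sup>2 = p\<^sup>2 + n (r\<^sup>2 - m)\<close>.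
  The Klein distance from \<open>x\<close> to the hit point is half the logarithm of the cross ratio
  \<open>Q = (a - p)(a + b) / ((a - b)(a + p))\<close>, so \<open>coth d\<^sub>K = (Q + 1)/(Q - 1) = (a\<^sup>2 - p b)/(a (b - p))\<close>.
  Multiplied by \<open>\<alpha>\<^sub>K = a/(1 - m)\<close> this collapses, because \<open>a\<^sup>2 - b\<^sup>2 = n (1 - r\<^sup>2)\<close>, to
  \<open>b/(r\<^sup>2 - m) + (1 - r\<^sup>2) p/((r\<^sup>2 - m)(1 - m)) = \<alpha>\<^sub>F + \<beta>\<^sub>F\<close>.

  The rest is computation: the matrix of \<open>\<alpha>\<^sub>F\<close> is \<open>((r\<^sup>2 - m) I + x x\<^sup>T)/(r\<^sup>2 - m)\<^sup>2\<close>, which has \<open>x\<close> as an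
  eigenvector, so \<open>\<parallel>\<beta>\<^sub>F\<parallel>\<^sup>2\<close> is explicit; \<open>\<beta>\<^sub>F = \<phi>(|x|\<^sup>2) \<langle>x,\<cdot>\<rangle>\<close> is radial, hence closed and exact;
  and all coefficients are rational functions without poles on the disc, hence smooth.\<close>

section \<open>Rays, chords and the Klein distance\<close>

lemma power2_norm_add_scaleR:
  fixes x v :: "'a::real_inner"
  shows "(norm (x + s *\<^sub>R v))\<^sup>2 = x \<bullet> x + 2 * s * (x \<bullet> v) + s\<^sup>2 * (v \<bullet> v)"
  unfolding power2_norm_eq_inner
  by (simp add: inner_add_left inner_add_right inner_commute power2_eq_square algebra_simps)

lemma inner_self_less_power2: "norm x < R \<Longrightarrow> x \<bullet> x < R\<^sup>2"
  by (metis norm_ge_zero power2_norm_eq_inner power_strict_mono zero_less_numeral)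

text \<open>From inside the sphere of radius \<open>R\<close> a ray meets it at most once: two parameters
  \<open>s \<noteq> t\<close> would be the two roots of the quadratic, whose product \<open>(|y|\<^sup>2 - R\<^sup>2) / |v|\<^sup>2\<close> is negative.\<close>
lemma ray_param_unique:
  fixes y v :: "'a::real_inner"
  assumes "norm y < R" "s > 0" "norm (y + s *\<^sub>R v) = R" "t > 0" "norm (y + t *\<^sub>R v) = R"
  shows "s = t"
proof (rule ccontr)
  assume "s \<noteq> t"
  have "y \<bullet> y + 2 * s * (y \<bullet> v) + s\<^sup>2 * (v \<bullet> v) = R\<^sup>2"
       "y \<bullet> y + 2 * t * (y \<bullet> v) + t\<^sup>2 * (v \<bullet> v) = R\<^sup>2"
    using assms power2_norm_add_scaleR[of y _ v] by metis+
  then have "(s - t) * ((v \<bullet> v) * (s + t) + 2 * (y \<bullet> v)) = 0"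
    and sum: "R\<^sup>2 - y \<bullet> y = s * (2 * (y \<bullet> v)) + s\<^sup>2 * (v \<bullet> v)"
    by (simp_all add: algebra_simps power2_eq_square)
  with \<open>s \<noteq> t\<close> have sum_roots: "2 * (y \<bullet> v) = - (v \<bullet> v) * (s + t)" by simp
  have "R\<^sup>2 - y \<bullet> y = - (v \<bullet> v) * s * t"
    unfolding sum sum_roots by (simp add: algebra_simps power2_eq_square)
  moreover have "(v \<bullet> v) * s * t \<ge> 0" using assms by simp
  ultimately show False using inner_self_less_power2[OF assms(1)] by linarith
qed

lemma ray_hit_eqI:
  fixes y v :: "real^2"
  assumes "norm y < R" "s > 0" "norm (y + s *\<^sub>R v) = R"
  shows "ray_hit y v R = y + s *\<^sub>R v"
  unfolding ray_hit_def
proof (rule the_equality)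
  show "\<exists>s'>0. y + s *\<^sub>R v = y + s' *\<^sub>R v \<and> norm (y + s *\<^sub>R v) = R" using assms by auto
next
  fix p assume "\<exists>t>0. p = y + t *\<^sub>R v \<and> norm p = R"
  then obtain t where "t > 0" "p = y + t *\<^sub>R v" "norm p = R" by auto
  with ray_param_unique[OF assms, of t] show "p = y + s *\<^sub>R v" by simp
qed

lemma norm_add_scaleR_root:
  fixes y v :: "'a::real_inner"
  assumes "v \<noteq> 0" "norm y < R" "\<sigma>\<^sup>2 = 1"
  shows "norm (y + ((- (y \<bullet> v) + \<sigma> * sqrt ((y \<bullet> v)\<^sup>2 + (v \<bullet> v) * (R\<^sup>2 - y \<bullet> y))) / (v \<bullet> v)) *\<^sub>R v) = R"
    (is "norm (y + ?s *\<^sub>R v) = R")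
proof -
  define d where "d = sqrt ((y \<bullet> v)\<^sup>2 + (v \<bullet> v) * (R\<^sup>2 - y \<bullet> y))"
  have n: "v \<bullet> v > 0" using assms by simp
  have "d\<^sup>2 = (y \<bullet> v)\<^sup>2 + (v \<bullet> v) * (R\<^sup>2 - y \<bullet> y)"
    unfolding d_def using n inner_self_less_power2[OF assms(2)] by simp
  have ns: "(v \<bullet> v) * ?s = - (y \<bullet> v) + \<sigma> * d" unfolding d_def using n by simp
  have "(v \<bullet> v) * (norm (y + ?s *\<^sub>R v))\<^sup>2
      = (v \<bullet> v) * (y \<bullet> y) + 2 * (y \<bullet> v) * ((v \<bullet> v) * ?s) + ((v \<bullet> v) * ?s)\<^sup>2"
    unfolding power2_norm_add_scaleR by (simp add: algebra_simps power2_eq_square)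
  also have "\<dots> = (v \<bullet> v) * (y \<bullet> y) - (y \<bullet> v)\<^sup>2 + \<sigma>\<^sup>2 * d\<^sup>2"
    unfolding ns by (simp add: algebra_simps power2_eq_square)
  also have "\<dots> = (v \<bullet> v) * R\<^sup>2" using \<open>d\<^sup>2 = _\<close> assms(3) by (simp add: algebra_simps)
  finally have "(v \<bullet> v) * (norm (y + ?s *\<^sub>R v))\<^sup>2 = (v \<bullet> v) * R\<^sup>2" .
  then have "(norm (y + ?s *\<^sub>R v))\<^sup>2 = R\<^sup>2" using n by simp
  moreover have "R > 0" using assms(2) norm_ge_zero[of y] by linarith
  ultimately show ?thesis by (metis norm_ge_zero power2_eq_imp_eq less_le)
qed

lemma dist_add_scaleR: "dist (x + s *\<^sub>R v) (x + t *\<^sub>R v) = \<bar>s - t\<bar> * norm v"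
  for x v :: "'a::real_normed_vector"
proof -
  have "(x + s *\<^sub>R v) - (x + t *\<^sub>R v) = (s - t) *\<^sub>R v" by (simp add: algebra_simps)
  then show ?thesis by (simp add: dist_norm)
qed

lemma klein_dist_chord:
  fixes x \<xi> :: "real^2"
  assumes "norm x < 1" "norm (x + s *\<^sub>R \<xi>) < 1" "\<xi> \<noteq> 0" "\<tau> < 0" "0 < s" "s < t"
    and "norm (x + t *\<^sub>R \<xi>) = 1" "norm (x + \<tau> *\<^sub>R \<xi>) = 1"
  shows "klein_dist x (x + s *\<^sub>R \<xi>) = ln ((t * (s - \<tau>)) / ((t - s) * (- \<tau>))) / 2"
proof -
  define P where "P = x + s *\<^sub>R \<xi>"
  have "x \<noteq> P" unfolding P_def using assms(3,5) by simp
  have "P - x = s *\<^sub>R \<xi>" "x + (t / s) *\<^sub>R (s *\<^sub>R \<xi>) = x + t *\<^sub>R \<xi>"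
    unfolding P_def using assms(5) by auto
  then have A: "ray_hit x (P - x) 1 = x + t *\<^sub>R \<xi>"
    using ray_hit_eqI[of x 1 "t / s" "s *\<^sub>R \<xi>"] assms by simp
  have c: "((s - \<tau>) / s) * (- s) = \<tau> - s" using assms(5) by (simp add: field_simps)
  have xP: "x - P = (- s) *\<^sub>R \<xi>" and endpoint: "P + ((s - \<tau>) / s) *\<^sub>R ((- s) *\<^sub>R \<xi>) = x + \<tau> *\<^sub>R \<xi>"
    unfolding P_def scaleR_scaleR c by (simp_all add: algebra_simps)
  have "ray_hit P ((- s) *\<^sub>R \<xi>) 1 = P + ((s - \<tau>) / s) *\<^sub>R ((- s) *\<^sub>R \<xi>)"
  proof (rule ray_hit_eqI)
    show "norm P < 1" "(s - \<tau>) / s > 0" using assms P_def by simp_all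
    show "norm (P + ((s - \<tau>) / s) *\<^sub>R ((- s) *\<^sub>R \<xi>)) = 1" unfolding endpoint by fact
  qed
  then have B: "ray_hit P (x - P) 1 = x + \<tau> *\<^sub>R \<xi>" unfolding xP endpoint .
  have dists: "dist x (x + t *\<^sub>R \<xi>) = t * norm \<xi>" "dist P (x + \<tau> *\<^sub>R \<xi>) = (s - \<tau>) * norm \<xi>"
    "dist P (x + t *\<^sub>R \<xi>) = (t - s) * norm \<xi>" "dist x (x + \<tau> *\<^sub>R \<xi>) = (- \<tau>) * norm \<xi>"
    unfolding P_def using dist_add_scaleR[of x 0 \<xi>] dist_add_scaleR[of x s \<xi>] assms(4-6)
    by auto
  have "(t * norm \<xi> * ((s - \<tau>) * norm \<xi>)) / ((t - s) * norm \<xi> * ((- \<tau>) * norm \<xi>))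
      = (t * (s - \<tau>) * (norm \<xi> * norm \<xi>)) / (((t - s) * (- \<tau>)) * (norm \<xi> * norm \<xi>))"
    by (simp only: ac_simps)
  also have "\<dots> = (t * (s - \<tau>)) / ((t - s) * (- \<tau>))" using assms(3) by simp
  finally have ratio: "(t * norm \<xi> * ((s - \<tau>) * norm \<xi>)) / ((t - s) * norm \<xi> * ((- \<tau>) * norm \<xi>))
      = (t * (s - \<tau>)) / ((t - s) * (- \<tau>))" .
  with \<open>x \<noteq> P\<close> show ?thesis
    unfolding P_def[symmetric] klein_dist_def Let_def A B dists ratio by simp
qed

lemma klein_dist_ray_hit:
  fixes x \<xi> :: "real^2"
  assumes "norm x < R" "R < 1" "\<xi> \<noteq> 0"
  defines "p \<equiv> x \<bullet> \<xi>" and "n \<equiv> \<xi> \<bullet> \<xi>"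
  defines "a \<equiv> sqrt (p\<^sup>2 + n * (1 - x \<bullet> x))" and "b \<equiv> sqrt (p\<^sup>2 + n * (R\<^sup>2 - x \<bullet> x))"
  shows "\<bar>p\<bar> < b" "b < a"
    and "klein_dist x (ray_hit x \<xi> R) = ln (((a - p) * (a + b)) / ((a - b) * (a + p))) / 2"
proof -
  have x1: "norm x < 1" using assms(1,2) by simp
  have "0 \<le> R" using assms(1) norm_ge_zero[of x] by linarith
  then have "n > 0" "x \<bullet> x < R\<^sup>2" "R\<^sup>2 < 1"
    unfolding n_def using assms inner_self_less_power2 by (simp_all add: power_less_one_iff)
  then have a2: "a\<^sup>2 = p\<^sup>2 + n * (1 - x \<bullet> x)" and b2: "b\<^sup>2 = p\<^sup>2 + n * (R\<^sup>2 - x \<bullet> x)"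
    and "a \<ge> 0" "b \<ge> 0"
    unfolding a_def b_def by simp_all
  have "n * (R\<^sup>2 - x \<bullet> x) > 0" "n * (R\<^sup>2 - x \<bullet> x) < n * (1 - x \<bullet> x)"
    using \<open>n > 0\<close> \<open>x \<bullet> x < R\<^sup>2\<close> \<open>R\<^sup>2 < 1\<close> by simp_all
  then have "\<bar>p\<bar>\<^sup>2 < b\<^sup>2" "b\<^sup>2 < a\<^sup>2" unfolding a2 b2 by simp_all
  then show "\<bar>p\<bar> < b" "b < a" using \<open>a \<ge> 0\<close> \<open>b \<ge> 0\<close> by (simp_all add: power2_less_imp_less)
  then have order: "(- p - a) / n < 0" "0 < (- p + b) / n" "(- p + b) / n < (- p + a) / n"
    using \<open>n > 0\<close> by (simp_all add: divide_neg_pos divide_strict_right_mono)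
  have on_circles: "norm (x + ((- p + a) / n) *\<^sub>R \<xi>) = 1" "norm (x + ((- p - a) / n) *\<^sub>R \<xi>) = 1"
      "norm (x + ((- p + b) / n) *\<^sub>R \<xi>) = R"
    using norm_add_scaleR_root[OF assms(3) x1, of 1] norm_add_scaleR_root[OF assms(3) x1, of "- 1"]
      norm_add_scaleR_root[OF assms(3,1), of 1]
    unfolding a_def b_def n_def p_def by (simp_all add: diff_divide_distrib)
  then have "ray_hit x \<xi> R = x + ((- p + b) / n) *\<^sub>R \<xi>"
    using ray_hit_eqI[OF assms(1) order(2)] by simp
  moreover have "klein_dist x (x + ((- p + b) / n) *\<^sub>R \<xi>) = ln (((- p + a) / n * ((- p + b) / n - (- p - a) / n))
      / (((- p + a) / n - (- p + b) / n) * (- ((- p - a) / n)))) / 2"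
    using assms(2) on_circles by (intro klein_dist_chord[OF x1 _ assms(3) order]) simp_all
  moreover have "(- p + a) / n = (a - p) / n" "(- p + b) / n - (- p - a) / n = (a + b) / n"
      "(- p + a) / n - (- p + b) / n = (a - b) / n" "- ((- p - a) / n) = (a + p) / n"
    by (simp_all add: diff_divide_distrib[symmetric] minus_divide_left)
  moreover have "((a - p) / n * ((a + b) / n)) / ((a - b) / n * ((a + p) / n))
      = ((a - p) * (a + b)) / ((a - b) * (a + p))"
    using \<open>n > 0\<close> by simp
  ultimately show "klein_dist x (ray_hit x \<xi> R) = ln (((a - p) * (a + b)) / ((a - b) * (a + p))) / 2"
    by (simp only:)
qed

section \<open>The identity \<open>\<F> = \<alpha>\<^sub>F + \<beta>\<^sub>F\<close>\<close>

lemma klein_r_pos: "0 < klein_r"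
proof -
  have "exp (2::real) > 1" by simp
  then show ?thesis unfolding klein_r_def by (intro divide_pos_pos) linarith+
qed

lemma klein_r_less_one: "klein_r < 1"
proof -
  have "exp (2::real) + 1 > 0" by (simp add: add_pos_pos)
  then show ?thesis unfolding klein_r_def by (simp add: divide_less_eq)
qed

lemma klein_r_sq_less_one: "klein_r\<^sup>2 < 1"
  using klein_r_pos klein_r_less_one by (simp add: power_less_one_iff)

lemma klein_disc_denominators_pos:
  assumes "x \<in> ball 0 klein_r"
  shows "klein_r\<^sup>2 - x \<bullet> x > 0" "1 - x \<bullet> x > 0"
  using inner_self_less_power2[of x klein_r] assms klein_r_sq_less_one by simp_all

lemma coth_half_ln: "Q > 0 \<Longrightarrow> coth (ln Q / 2) = (Q + 1) / (Q - 1)"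
proof -
  assume "Q > 0"
  then have "tanh (ln Q / 2) = (Q - 1) / (Q + 1)"
    using tanh_ln_real[of "sqrt Q"] by (simp add: ln_sqrt)
  moreover have "coth t = inverse (tanh t)" for t by (simp add: coth_def tanh_def)
  ultimately show ?thesis by simp
qed

lemma coth_cross_ratio:
  fixes a b p :: real
  assumes "\<bar>p\<bar> < b" "b < a"
  defines "Q \<equiv> ((a - p) * (a + b)) / ((a - b) * (a + p))"
  shows "Q > 0" "(Q + 1) / (Q - 1) = (a\<^sup>2 - p * b) / (a * (b - p))"
proof -
  have pos: "a - p > 0" "a + b > 0" "a - b > 0" "a + p > 0" "b - p > 0" "a > 0"
    using assms(1,2) by auto
  then show "Q > 0" unfolding Q_def by simp
  define X Y D where "X = a\<^sup>2 - p * b" and "Y = a * (b - p)" and "D = (a - b) * (a + p)"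
  have "D > 0" "Y > 0" unfolding D_def Y_def using pos by simp_all
  have "Q = ((a - p) * (a + b)) / D" unfolding Q_def D_def ..
  then have "Q + 1 = ((a - p) * (a + b) + D) / D" "Q - 1 = ((a - p) * (a + b) - D) / D"
    using \<open>D > 0\<close> by (simp_all add: field_simps)
  moreover have "(a - p) * (a + b) + D = 2 * X" "(a - p) * (a + b) - D = 2 * Y"
    unfolding X_def Y_def D_def by (simp_all add: algebra_simps power2_eq_square)
  ultimately have "Q + 1 = 2 * X / D" "Q - 1 = 2 * Y / D" by simp_all
  then have "(Q + 1) / (Q - 1) = (2 * X / D) / (2 * Y / D)" by simp
  also have "\<dots> = X / Y" using \<open>D > 0\<close> by simp
  finally show "(Q + 1) / (Q - 1) = (a\<^sup>2 - p * b) / (a * (b - p))" unfolding X_def Y_def .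
qed

lemma coth_mul_alpha_K_identity:
  fixes a b p n m r :: real
  assumes "a\<^sup>2 = p\<^sup>2 + n * (1 - m)" "b\<^sup>2 = p\<^sup>2 + n * (r\<^sup>2 - m)"
    and "a \<noteq> 0" "b \<noteq> p" "m < r\<^sup>2" "r\<^sup>2 < 1"
  shows "(a\<^sup>2 - p * b) / (a * (b - p)) * (a / (1 - m))
       = b / (r\<^sup>2 - m) + (1 - r\<^sup>2) * p / ((r\<^sup>2 - m) * (1 - m))"
proof -
  \<comment> \<open>\<open>a\<^sup>2 - b\<^sup>2 = n (1 - r\<^sup>2)\<close> and \<open>b\<^sup>2 - p\<^sup>2 = n (r\<^sup>2 - m)\<close> eliminate \<open>n\<close>\<close>
  have key: "(a\<^sup>2 - p * b) * (r\<^sup>2 - m) = (b * (1 - m) + (1 - r\<^sup>2) * p) * (b - p)"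
  proof -
    have "(b * (1 - m) + (1 - r\<^sup>2) * p) * (b - p) = b\<^sup>2 * (1 - m) + (m - r\<^sup>2) * p * b - (1 - r\<^sup>2) * p\<^sup>2"
      by (simp add: algebra_simps power2_eq_square)
    also have "\<dots> = (a\<^sup>2 - p * b) * (r\<^sup>2 - m)"
      unfolding assms(1,2) by (simp add: algebra_simps)
    finally show ?thesis by simp
  qed
  have nz: "r\<^sup>2 - m \<noteq> 0" "1 - m \<noteq> 0" "b - p \<noteq> 0" using assms by auto
  have "(a\<^sup>2 - p * b) / (a * (b - p)) * (a / (1 - m)) = (a\<^sup>2 - p * b) / ((b - p) * (1 - m))"
    using assms(3) by simp
  also have "\<dots> = (b * (1 - m) + (1 - r\<^sup>2) * p) / ((r\<^sup>2 - m) * (1 - m))"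
  proof -
    have "(a\<^sup>2 - p * b) * ((r\<^sup>2 - m) * (1 - m)) = (b * (1 - m) + (1 - r\<^sup>2) * p) * ((b - p) * (1 - m))"
      using key by (metis mult.assoc)
    with nz show ?thesis by (simp add: frac_eq_eq)
  qed
  also have "\<dots> = b / (r\<^sup>2 - m) + (1 - r\<^sup>2) * p / ((r\<^sup>2 - m) * (1 - m))"
    using nz by (simp add: add_divide_distrib)
  finally show ?thesis .
qed

lemma FF_eq_alpha_F_add_beta_F:
  fixes x \<xi> :: "real^2"
  assumes "norm x < klein_r"
  shows "FF x \<xi> = alpha_F x \<xi> + beta_F x \<xi>"
proof (cases "\<xi> = 0")
  case True
  then show ?thesis by (simp add: FF_def alpha_F_def beta_F_def)
next
  case False
  define n p m where "n = \<xi> \<bullet> \<xi>" and "p = x \<bullet> \<xi>" and "m = x \<bullet> x"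
  define a b where "a = sqrt (p\<^sup>2 + n * (1 - m))" and "b = sqrt (p\<^sup>2 + n * (klein_r\<^sup>2 - m))"
  note chord = klein_dist_ray_hit[OF assms klein_r_less_one False, folded p_def n_def m_def,
      folded a_def b_def]
  note Q = coth_cross_ratio[OF chord(1,2)]
  have "m < klein_r\<^sup>2" unfolding m_def using inner_self_less_power2[OF assms] .
  have a2: "a\<^sup>2 = p\<^sup>2 + n * (1 - m)" and b2: "b\<^sup>2 = p\<^sup>2 + n * (klein_r\<^sup>2 - m)"
    unfolding a_def b_def n_def using \<open>m < klein_r\<^sup>2\<close> klein_r_sq_less_one by simp_all
  have "a \<noteq> 0" "b \<noteq> p" using chord(1,2) by auto
  have coeffs: "alpha_K x \<xi> = a / (1 - m)" "alpha_F x \<xi> = b / (klein_r\<^sup>2 - m)"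
      "beta_F x \<xi> = (1 - klein_r\<^sup>2) * p / ((klein_r\<^sup>2 - m) * (1 - m))"
    unfolding alpha_K_def alpha_F_def beta_F_def a_def b_def m_def n_def p_def
      power2_norm_eq_inner
    by (simp_all add: algebra_simps)
  have "FF x \<xi> = coth (klein_dist x (ray_hit x \<xi> klein_r)) * alpha_K x \<xi>"
    using False by (simp add: FF_def)
  also have "\<dots> = (a\<^sup>2 - p * b) / (a * (b - p)) * (a / (1 - m))"
    unfolding chord(3) coeffs coth_half_ln[OF Q(1)] Q(2) ..
  also have "\<dots> = alpha_F x \<xi> + beta_F x \<xi>"
    unfolding coeffs
    by (rule coth_mul_alpha_K_identity[OF a2 b2 \<open>a \<noteq> 0\<close> \<open>b \<noteq> p\<close> \<open>m < klein_r\<^sup>2\<close> klein_r_sq_less_one])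
  finally show ?thesis .
qed

section \<open>Rational functions are smooth\<close>

text \<open>Partial derivatives of such functions are again of this kind, which is how smoothness
  (\<open>C_k\<close> for every \<open>k\<close>) is obtained.\<close>
inductive rational_on :: "(real^2) set \<Rightarrow> (real^2 \<Rightarrow> real) \<Rightarrow> bool" for S where
  rational_on_const: "rational_on S (\<lambda>x. c)"
| rational_on_coord: "rational_on S (\<lambda>x. x $ i)"
| rational_on_add: "rational_on S f \<Longrightarrow> rational_on S g \<Longrightarrow> rational_on S (\<lambda>x. f x + g x)"
| rational_on_mult: "rational_on S f \<Longrightarrow> rational_on S g \<Longrightarrow> rational_on S (\<lambda>x. f x * g x)"
| rational_on_inverse:
    "rational_on S f \<Longrightarrow> (\<And>x. x \<in> S \<Longrightarrow> f x \<noteq> 0) \<Longrightarrow> rational_on S (\<lambda>x. inverse (f x))"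

lemma rational_on_uminus: "rational_on S f \<Longrightarrow> rational_on S (\<lambda>x. - f x)"
  using rational_on_mult[OF rational_on_const[of S "- 1"]] by simp

lemma rational_on_diff: "rational_on S f \<Longrightarrow> rational_on S g \<Longrightarrow> rational_on S (\<lambda>x. f x - g x)"
  using rational_on_add[OF _ rational_on_uminus] by simp

lemma inner_real2: "x \<bullet> y = x $ 1 * y $ 1 + x $ 2 * y $ 2" for x y :: "real^2"
  by (simp add: inner_vec_def sum_2)

lemma rational_on_inner_self: "rational_on S (\<lambda>x. x \<bullet> x)"
  unfolding inner_real2 by (intro rational_on_add rational_on_mult rational_on_coord)

lemma rational_on_has_derivative:
  assumes "rational_on S f"
  shows "\<exists>g :: 2 \<Rightarrow> real^2 \<Rightarrow> real. (\<forall>i. rational_on S (g i)) \<and>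
    (\<forall>x\<in>S. (f has_derivative (\<lambda>h. h $ 1 * g 1 x + h $ 2 * g 2 x)) (at x))"
  using assms
proof induction
  case (rational_on_const c)
  show ?case by (rule exI[of _ "\<lambda>i x. 0"]) (auto intro: rational_on.rational_on_const)
next
  case (rational_on_coord j)
  have "(\<lambda>h::real^2. h $ j) = (\<lambda>h. h $ 1 * (if 1 = j then 1 else 0) + h $ 2 * (if 2 = j then 1 else 0))"
    using exhaust_2[of j] by auto
  then show ?case
    by (intro exI[of _ "\<lambda>i x. if i = j then 1 else 0"])
      (auto intro: rational_on.rational_on_const bounded_linear_imp_has_derivative
        bounded_linear_vec_nth simp del: One_nat_def)
next
  case (rational_on_add f g)
  then obtain F G :: "2 \<Rightarrow> real^2 \<Rightarrow> real" where
    "\<forall>i. rational_on S (F i)" "\<forall>x\<in>S. (f has_derivative (\<lambda>h. h $ 1 * F 1 x + h $ 2 * F 2 x)) (at x)"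
    "\<forall>i. rational_on S (G i)" "\<forall>x\<in>S. (g has_derivative (\<lambda>h. h $ 1 * G 1 x + h $ 2 * G 2 x)) (at x)"
    by blast
  then show ?case
    by (intro exI[of _ "\<lambda>i x. F i x + G i x"])
      (auto intro!: rational_on.rational_on_add intro: has_derivative_eq_rhs[OF has_derivative_add]
        simp: algebra_simps)
next
  case (rational_on_mult f g)
  then obtain F G :: "2 \<Rightarrow> real^2 \<Rightarrow> real" where
    "\<forall>i. rational_on S (F i)" "\<forall>x\<in>S. (f has_derivative (\<lambda>h. h $ 1 * F 1 x + h $ 2 * F 2 x)) (at x)"
    "\<forall>i. rational_on S (G i)" "\<forall>x\<in>S. (g has_derivative (\<lambda>h. h $ 1 * G 1 x + h $ 2 * G 2 x)) (at x)"
    by blast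
  with rational_on_mult.hyps show ?case
    by (intro exI[of _ "\<lambda>i x. f x * G i x + F i x * g x"])
      (auto intro!: rational_on.rational_on_add rational_on.rational_on_mult
        intro: has_derivative_eq_rhs[OF has_derivative_mult] simp: algebra_simps)
next
  case (rational_on_inverse f)
  then obtain F :: "2 \<Rightarrow> real^2 \<Rightarrow> real" where
    "\<forall>i. rational_on S (F i)" "\<forall>x\<in>S. (f has_derivative (\<lambda>h. h $ 1 * F 1 x + h $ 2 * F 2 x)) (at x)"
    by blast
  with rational_on_inverse.hyps show ?case
    by (intro exI[of _ "\<lambda>i x. - (inverse (f x) * F i x * inverse (f x))"])
      (auto intro!: rational_on_uminus rational_on.rational_on_mult rational_on.rational_on_inverse
        intro: has_derivative_eq_rhs[OF Deriv.has_derivative_inverse] simp: algebra_simps)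
qed

lemma rational_on_C_k:
  assumes "open S" "rational_on S f" "\<And>x. x \<in> S \<Longrightarrow> g x = f x"
  shows "C_k k S g"
  using assms(2,3)
proof (induction k arbitrary: f g)
  case 0
  obtain F :: "2 \<Rightarrow> real^2 \<Rightarrow> real"
    where "\<forall>x\<in>S. (f has_derivative (\<lambda>h. h $ 1 * F 1 x + h $ 2 * F 2 x)) (at x)"
    using rational_on_has_derivative[OF 0(1)] by blast
  then have "continuous_on S f"
    using has_derivative_continuous continuous_at_imp_continuous_on by blast
  then show ?case using 0(2) continuous_on_cong by force
next
  case (Suc k)
  obtain F :: "2 \<Rightarrow> real^2 \<Rightarrow> real" where F: "\<forall>i. rational_on S (F i)"
    "\<forall>x\<in>S. (f has_derivative (\<lambda>h. h $ 1 * F 1 x + h $ 2 * F 2 x)) (at x)"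
    using rational_on_has_derivative[OF Suc(2)] by blast
  define D where "D x h = h $ 1 * F 1 x + h $ 2 * F 2 x" for x and h :: "real^2"
  have "(g has_derivative D x) (at x)" if "x \<in> S" for x
    using has_derivative_transform_within_open[OF F(2)[rule_format, OF that] assms(1) that] Suc(3)
    unfolding D_def by auto
  moreover have "D x (axis i 1) = F i x" for x i
    unfolding D_def using exhaust_2[of i] by (auto simp: axis_def)
  ultimately show ?case using Suc.IH[OF F(1)[rule_format]] by (auto intro!: exI[of _ D])
qed

lemma rational_on_smooth_on:
  "open S \<Longrightarrow> rational_on S f \<Longrightarrow> (\<And>x. x \<in> S \<Longrightarrow> g x = f x) \<Longrightarrow> smooth_on S g"
  unfolding smooth_on_def using rational_on_C_k by blast

section \<open>The Riemannian metric \<open>\<alpha>\<^sub>F\<close>\<close>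

lemma axis_inner_matrix_vector: "axis i 1 \<bullet> (A *v axis j 1) = A $ i $ j"
  for A :: "real^'n^'n"
  by (simp add: matrix_vector_mult_basis column_def inner_axis')

lemma metric_coeffs_eq_quadratic_form:
  fixes A :: "real^2^2"
  assumes "\<And>\<xi>. \<alpha> x \<xi> = sqrt (\<xi> \<bullet> (A *v \<xi>))" "\<And>\<xi>. 0 \<le> \<xi> \<bullet> (A *v \<xi>)" "transpose A = A"
  shows "metric_coeffs \<alpha> x = A"
proof -
  have sq: "(\<alpha> x \<xi>)\<^sup>2 = \<xi> \<bullet> (A *v \<xi>)" for \<xi> using assms(1,2) by simp
  have "A $ j $ i = A $ i $ j" for i j
    using arg_cong[OF assms(3), of "\<lambda>B. B $ i $ j"] by (simp add: transpose_def)
  then have "((axis i 1 + axis j 1) \<bullet> (A *v (axis i 1 + axis j 1)) - axis i 1 \<bullet> (A *v axis i 1)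
      - axis j 1 \<bullet> (A *v axis j 1)) / 2 = A $ i $ j" for i j
    by (simp add: matrix_vector_right_distrib inner_add_left inner_add_right axis_inner_matrix_vector)
  then show ?thesis
    unfolding metric_coeffs_def sq by (simp add: vec_eq_iff)
qed

lemma matrix_inv_mult_vec_eq:
  fixes A :: "real^'n^'n"
  assumes "\<And>v. v \<noteq> 0 \<Longrightarrow> v \<bullet> (A *v v) > 0" "A *v y = z"
  shows "matrix_inv A *v z = y"
proof -
  have "\<forall>v. A *v v = 0 \<longrightarrow> v = 0" using assms(1) by force
  then have "invertible A" using matrix_left_invertible_ker invertible_left_inverse by blast
  then have "matrix_inv A ** A = mat 1"
    unfolding invertible_def matrix_inv_def by (rule someI2_ex) simp
  then show ?thesis using assms(2) by (metis matrix_vector_mul_assoc matrix_vector_mul_lid)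
qed

lemma matrix_vector_mult_scaled_rank_one:
  fixes x \<xi> :: "real^'n"
  shows "(\<chi> i j. (c * (if i = j then 1 else 0) + x $ i * x $ j) / c\<^sup>2) *v \<xi>
       = (1 / c) *\<^sub>R \<xi> + ((x \<bullet> \<xi>) / c\<^sup>2) *\<^sub>R x"
proof -
  have "(c * (if i = j then 1 else 0) + x $ i * x $ j) / c\<^sup>2 * \<xi> $ j
      = (1 / c) * (if i = j then \<xi> $ j else 0) + (x $ i / c\<^sup>2) * (x $ j * \<xi> $ j)" for i j
    by (simp add: add_divide_distrib distrib_right power2_eq_square)
  then have "(\<Sum>j\<in>UNIV. (c * (if i = j then 1 else 0) + x $ i * x $ j) / c\<^sup>2 * \<xi> $ j)
      = (1 / c) * (\<Sum>j\<in>UNIV. if i = j then \<xi> $ j else 0) + (x $ i / c\<^sup>2) * (\<Sum>j\<in>UNIV. x $ j * \<xi> $ j)"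
    for i by (simp only: sum.distrib sum_distrib_left)
  moreover have "(\<Sum>j\<in>UNIV. x $ j * \<xi> $ j) = x \<bullet> \<xi>" by (simp add: inner_vec_def)
  ultimately have "(\<Sum>j\<in>UNIV. (c * (if i = j then 1 else 0) + x $ i * x $ j) / c\<^sup>2 * \<xi> $ j)
      = (1 / c) * \<xi> $ i + (x \<bullet> \<xi>) / c\<^sup>2 * x $ i" for i
    by simp
  then show ?thesis by (simp add: vec_eq_iff matrix_vector_mult_def)
qed

definition alpha_F_matrix :: "real^2 \<Rightarrow> real^2^2" where
  "alpha_F_matrix x = (\<chi> i j. ((klein_r\<^sup>2 - x \<bullet> x) * (if i = j then 1 else 0) + x $ i * x $ j)
                               / (klein_r\<^sup>2 - x \<bullet> x)\<^sup>2)"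

lemma alpha_F_matrix_mult_vec:
  "alpha_F_matrix x *v \<xi> = (1 / (klein_r\<^sup>2 - x \<bullet> x)) *\<^sub>R \<xi> + ((x \<bullet> \<xi>) / (klein_r\<^sup>2 - x \<bullet> x)\<^sup>2) *\<^sub>R x"
  unfolding alpha_F_matrix_def by (rule matrix_vector_mult_scaled_rank_one)

lemma alpha_F_matrix_quadratic_form:
  "\<xi> \<bullet> (alpha_F_matrix x *v \<xi>) = (\<xi> \<bullet> \<xi>) / (klein_r\<^sup>2 - x \<bullet> x) + (x \<bullet> \<xi>)\<^sup>2 / (klein_r\<^sup>2 - x \<bullet> x)\<^sup>2"
  by (simp add: alpha_F_matrix_mult_vec inner_add_right inner_commute[of \<xi> x]
      power2_eq_square[of "x \<bullet> \<xi>"])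

lemma alpha_F_eq_sqrt_quadratic_form:
  assumes "x \<in> ball 0 klein_r"
  shows "alpha_F x \<xi> = sqrt (\<xi> \<bullet> (alpha_F_matrix x *v \<xi>))"
proof -
  define c where "c = klein_r\<^sup>2 - x \<bullet> x"
  have "c > 0" unfolding c_def using klein_disc_denominators_pos[OF assms] by simp
  then have "\<xi> \<bullet> (alpha_F_matrix x *v \<xi>) = (c * (\<xi> \<bullet> \<xi>) + (x \<bullet> \<xi>)\<^sup>2) / c\<^sup>2"
    unfolding alpha_F_matrix_quadratic_form c_def[symmetric] by (simp add: field_simps power2_eq_square)
  with \<open>c > 0\<close> show ?thesis
    unfolding alpha_F_def power2_norm_eq_inner c_def[symmetric] by (simp add: real_sqrt_divide)
qed

lemma alpha_F_matrix_pos_def: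
  assumes "x \<in> ball 0 klein_r" "\<xi> \<noteq> 0"
  shows "\<xi> \<bullet> (alpha_F_matrix x *v \<xi>) > 0"
  unfolding alpha_F_matrix_quadratic_form using klein_disc_denominators_pos[OF assms(1)] assms(2)
  by (simp add: add_pos_nonneg)

lemma alpha_F_matrix_symmetric: "transpose (alpha_F_matrix x) = alpha_F_matrix x"
  by (simp add: alpha_F_matrix_def transpose_def vec_eq_iff mult.commute)

lemma metric_coeffs_alpha_F:
  assumes "x \<in> ball 0 klein_r"
  shows "metric_coeffs alpha_F x = alpha_F_matrix x"
proof (rule metric_coeffs_eq_quadratic_form)
  show "alpha_F x \<xi> = sqrt (\<xi> \<bullet> (alpha_F_matrix x *v \<xi>))" for \<xi>
    by (rule alpha_F_eq_sqrt_quadratic_form[OF assms])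
  show "0 \<le> \<xi> \<bullet> (alpha_F_matrix x *v \<xi>)" for \<xi>
    using alpha_F_matrix_pos_def[OF assms, of \<xi>] by (cases "\<xi> = 0") auto
qed (rule alpha_F_matrix_symmetric)

lemma riemannian_on_alpha_F: "riemannian_on (ball 0 klein_r) alpha_F"
  unfolding riemannian_on_def
proof (intro conjI ballI allI impI)
  fix i j :: 2
  have "rational_on (ball 0 klein_r) (\<lambda>x. ((klein_r\<^sup>2 - x \<bullet> x) * (if i = j then 1 else 0) + x $ i * x $ j)
      * inverse (klein_r\<^sup>2 - x \<bullet> x) * inverse (klein_r\<^sup>2 - x \<bullet> x))"
    using klein_disc_denominators_pos(1)
    by (intro rational_on_mult rational_on_add rational_on_diff rational_on_inverse rational_on_const
        rational_on_coord rational_on_inner_self) force+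
  then show "smooth_on (ball 0 klein_r) (\<lambda>x. metric_coeffs alpha_F x $ i $ j)"
    by (rule rational_on_smooth_on[OF open_ball])
      (simp add: metric_coeffs_alpha_F alpha_F_matrix_def divide_inverse power2_eq_square)
qed (simp_all add: metric_coeffs_alpha_F alpha_F_eq_sqrt_quadratic_form alpha_F_matrix_pos_def
    alpha_F_matrix_symmetric)

section \<open>The 1-form \<open>\<beta>\<^sub>F\<close>\<close>

lemma has_derivative_radial:
  fixes x :: "'a::real_inner"
  assumes "(\<psi> has_real_derivative d) (at (x \<bullet> x))"
  shows "((\<lambda>y. \<psi> (y \<bullet> y)) has_derivative (\<lambda>h. 2 * (x \<bullet> h) * d)) (at x)"
proof -
  have "((\<lambda>y. y \<bullet> y) has_derivative (\<lambda>h. 2 * (x \<bullet> h))) (at x)"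
    using has_derivative_inner[OF has_derivative_ident has_derivative_ident, of x]
    by (simp add: inner_commute)
  from DERIV_compose_FDERIV[where g = "\<lambda>y. y \<bullet> y", OF assms this] show ?thesis
    by (simp add: ac_simps)
qed

text \<open>A radial 1-form \<open>\<phi>(|y|\<^sup>2) y\<close> is closed: both mixed partials equal \<open>2 \<phi>'(|x|\<^sup>2) x\<^sub>1 x\<^sub>2\<close>.\<close>
lemma closed_form_on_radial:
  assumes "\<And>y. form_coeffs \<beta> y = \<phi> (y \<bullet> y) *\<^sub>R y" "\<And>x. x \<in> S \<Longrightarrow> \<phi> differentiable (at (x \<bullet> x))"
  shows "closed_form_on S \<beta>"
proof -
  define D where "D k x h = h $ k * \<phi> (x \<bullet> x) + x $ k * (2 * (x \<bullet> h) * deriv \<phi> (x \<bullet> x))"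
    for k :: 2 and x h :: "real^2"
  have "((\<lambda>y. form_coeffs \<beta> y $ k) has_derivative D k x) (at x)" if "x \<in> S" for k x
  proof -
    have "((\<lambda>y. \<phi> (y \<bullet> y)) has_derivative (\<lambda>h. 2 * (x \<bullet> h) * deriv \<phi> (x \<bullet> x))) (at x)"
      using assms(2)[OF that] by (intro has_derivative_radial) (simp add: DERIV_deriv_iff_real_differentiable)
    from has_derivative_mult[OF this bounded_linear_imp_has_derivative[OF bounded_linear_vec_nth]]
    show ?thesis unfolding assms(1) D_def by (simp add: algebra_simps)
  qed
  moreover have "D 1 x (axis 2 1) = D 2 x (axis 1 1)" for x
    unfolding D_def by (simp add: inner_axis) (simp add: axis_def)
  ultimately show ?thesis unfolding closed_form_on_def by blast
qed

lemma form_coeffs_beta_F: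
  "form_coeffs beta_F x = ((1 - klein_r\<^sup>2) / ((klein_r\<^sup>2 - x \<bullet> x) * (1 - x \<bullet> x))) *\<^sub>R x"
  by (simp add: vec_eq_iff form_coeffs_def beta_F_def power2_norm_eq_inner inner_axis)

lemma beta_F_eq_inner_form_coeffs: "beta_F x \<xi> = form_coeffs beta_F x \<bullet> \<xi>"
  by (simp add: form_coeffs_beta_F beta_F_def power2_norm_eq_inner)

lemma one_form_on_beta_F: "one_form_on (ball 0 klein_r) beta_F"
  unfolding one_form_on_def
proof (intro conjI ballI allI)
  fix i :: 2
  have "rational_on (ball 0 klein_r)
      (\<lambda>x. (1 - klein_r\<^sup>2) * x $ i * inverse (klein_r\<^sup>2 - x \<bullet> x) * inverse (1 - x \<bullet> x))"
    using klein_disc_denominators_pos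
    by (intro rational_on_mult rational_on_diff rational_on_inverse rational_on_const
        rational_on_coord rational_on_inner_self) force+
  then show "smooth_on (ball 0 klein_r) (\<lambda>x. form_coeffs beta_F x $ i)"
    by (rule rational_on_smooth_on[OF open_ball]) (simp add: form_coeffs_beta_F divide_inverse)
qed (rule beta_F_eq_inner_form_coeffs)

lemma closed_form_on_beta_F: "closed_form_on (ball 0 klein_r) beta_F"
proof (rule closed_form_on_radial[OF form_coeffs_beta_F])
  fix x :: "real^2" assume "x \<in> ball 0 klein_r"
  then have "klein_r\<^sup>2 - x \<bullet> x \<noteq> 0" "1 - x \<bullet> x \<noteq> 0" using klein_disc_denominators_pos[of x] by auto
  then show "(\<lambda>t. (1 - klein_r\<^sup>2) / ((klein_r\<^sup>2 - t) * (1 - t))) differentiable (at (x \<bullet> x))"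
    unfolding real_differentiable_def by (auto intro!: derivative_eq_intros)
qed

lemma DERIV_half_ln_quotient:
  fixes t R :: real
  assumes "t < R" "t < 1"
  shows "((\<lambda>s. ln ((1 - s) / (R - s)) / 2) has_real_derivative (1 - R) / ((R - t) * (1 - t)) / 2) (at t)"
proof -
  have "R - t \<noteq> 0" "1 - t \<noteq> 0" using assms by simp_all
  then show ?thesis using assms
    by (auto intro!: derivative_eq_intros simp: divide_simps) (simp add: algebra_simps)
qed

lemma f_pot_has_derivative:
  assumes "x \<in> ball 0 klein_r"
  shows "(f_pot has_derivative beta_F x) (at x)"
proof -
  define K where "K = (1 - klein_r\<^sup>2) / ((klein_r\<^sup>2 - x \<bullet> x) * (1 - x \<bullet> x))"
  have "x \<bullet> x < klein_r\<^sup>2" "x \<bullet> x < 1" using klein_disc_denominators_pos[OF assms] by simp_all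
  from has_derivative_radial[OF DERIV_half_ln_quotient[OF this, folded K_def]]
  have "((\<lambda>y. ln ((1 - y \<bullet> y) / (klein_r\<^sup>2 - y \<bullet> y)) / 2) has_derivative (\<lambda>h. (x \<bullet> h) * K)) (at x)"
    by simp
  moreover have "f_pot = (\<lambda>y. ln ((1 - y \<bullet> y) / (klein_r\<^sup>2 - y \<bullet> y)) / 2)"
    by (simp add: fun_eq_iff f_pot_def power2_norm_eq_inner)
  moreover have "(\<lambda>h. (x \<bullet> h) * K) = beta_F x"
    by (simp add: fun_eq_iff K_def beta_F_def power2_norm_eq_inner)
  ultimately show ?thesis by simp
qed

lemma form_norm_sq_alpha_F_beta_F:
  assumes "x \<in> ball 0 klein_r"
  shows "form_norm_sq alpha_F beta_F x
      = (x \<bullet> x) * (1 - klein_r\<^sup>2)\<^sup>2 / (klein_r\<^sup>2 * (1 - x \<bullet> x)\<^sup>2)"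
proof -
  define m c k where "m = x \<bullet> x" and "c = klein_r\<^sup>2 - x \<bullet> x"
    and "k = (1 - klein_r\<^sup>2) / ((klein_r\<^sup>2 - x \<bullet> x) * (1 - x \<bullet> x))"
  have "c > 0" "1 - m > 0" unfolding c_def m_def using klein_disc_denominators_pos[OF assms] by simp_all
  have "klein_r\<^sup>2 > 0" "klein_r\<^sup>2 = c + m" using klein_r_pos unfolding c_def m_def by simp_all
  \<comment> \<open>\<open>x\<close> is an eigenvector of \<open>alpha_F_matrix x\<close> with eigenvalue \<open>klein_r\<^sup>2 / c\<^sup>2\<close>\<close>
  have "1 / c + m / c\<^sup>2 = klein_r\<^sup>2 / c\<^sup>2"
    unfolding \<open>klein_r\<^sup>2 = c + m\<close> using \<open>c > 0\<close> by (simp add: field_simps power2_eq_square)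
  then have "alpha_F_matrix x *v x = (klein_r\<^sup>2 / c\<^sup>2) *\<^sub>R x"
    unfolding alpha_F_matrix_mult_vec c_def[symmetric]
    unfolding m_def[symmetric] scaleR_add_left[symmetric] by (simp only:)
  with \<open>c > 0\<close> \<open>klein_r\<^sup>2 > 0\<close> have eigen: "alpha_F_matrix x *v ((c\<^sup>2 / klein_r\<^sup>2) *\<^sub>R (k *\<^sub>R x)) = k *\<^sub>R x"
    by (simp add: matrix_vector_mult_scaleR)
  have "matrix_inv (alpha_F_matrix x) *v (k *\<^sub>R x) = (c\<^sup>2 / klein_r\<^sup>2) *\<^sub>R (k *\<^sub>R x)"
    using alpha_F_matrix_pos_def[OF assms] eigen by (rule matrix_inv_mult_vec_eq)
  then have "form_norm_sq alpha_F beta_F x = k\<^sup>2 * c\<^sup>2 / klein_r\<^sup>2 * m"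
    unfolding form_norm_sq_def metric_coeffs_alpha_F[OF assms] form_coeffs_beta_F k_def[symmetric]
    by (simp add: m_def power2_eq_square)
  also have "\<dots> = m * (1 - klein_r\<^sup>2)\<^sup>2 / (klein_r\<^sup>2 * (1 - m)\<^sup>2)"
  proof -
    have "(q' / (c * u))\<^sup>2 * c\<^sup>2 / q * m = m * q'\<^sup>2 / (q * u\<^sup>2)" if "c \<noteq> 0" "u \<noteq> 0" for q' u q :: real
      using that by (simp add: field_simps power2_eq_square)
    from this[of "1 - m" "1 - klein_r\<^sup>2" "klein_r\<^sup>2"] \<open>c > 0\<close> \<open>1 - m > 0\<close>
    show ?thesis unfolding k_def c_def[symmetric] unfolding m_def[symmetric] by simp
  qed
  finally show ?thesis unfolding m_def .
qed

text \<open>The bound is \<open>r\<^sup>2 (1 - m)\<^sup>2 - m (1 - r\<^sup>2)\<^sup>2 = (r\<^sup>2 - m) (1 - r\<^sup>2 m) > 0\<close> with \<open>m = |x|\<^sup>2\<close>.\<close>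
lemma form_norm_sq_alpha_F_beta_F_less_one:
  assumes "x \<in> ball 0 klein_r"
  shows "form_norm_sq alpha_F beta_F x < 1"
proof -
  define m r where "m = x \<bullet> x" and "r = klein_r"
  have "r\<^sup>2 - m > 0" "1 - m > 0" "r\<^sup>2 < 1" "r > 0"
    unfolding m_def r_def using klein_disc_denominators_pos[OF assms] klein_r_sq_less_one klein_r_pos by simp_all
  then have "r\<^sup>2 * m < r\<^sup>2 * 1" by (intro mult_strict_left_mono) simp_all
  with \<open>r\<^sup>2 < 1\<close> have "(r\<^sup>2 - m) * (1 - r\<^sup>2 * m) > 0" using \<open>r\<^sup>2 - m > 0\<close> by simp
  moreover have "r\<^sup>2 * (1 - m)\<^sup>2 - m * (1 - r\<^sup>2)\<^sup>2 = (r\<^sup>2 - m) * (1 - r\<^sup>2 * m)"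
    by (simp add: algebra_simps power2_eq_square)
  ultimately have "m * (1 - r\<^sup>2)\<^sup>2 < r\<^sup>2 * (1 - m)\<^sup>2" by simp
  moreover have "r\<^sup>2 * (1 - m)\<^sup>2 > 0" using \<open>r > 0\<close> \<open>1 - m > 0\<close> by simp
  ultimately show ?thesis
    unfolding form_norm_sq_alpha_F_beta_F[OF assms] m_def[symmetric] r_def[symmetric]
    by (simp add: divide_less_eq)
qed

theorem theorem3p1:
  defines "DK \<equiv> {x :: real^2. norm x < klein_r}"
  shows "(\<forall>x\<in>DK. \<forall>\<xi>. FF x \<xi> = alpha_F x \<xi> + beta_F x \<xi>)
    \<and> riemannian_on DK alpha_F
    \<and> one_form_on DK beta_F
    \<and> (\<forall>x\<in>DK. (f_pot has_derivative beta_F x) (at x))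
    \<and> closed_form_on DK beta_F
    \<and> (\<forall>x\<in>DK. form_norm_sq alpha_F beta_F x
           = (norm x)\<^sup>2 * (1 - klein_r\<^sup>2)\<^sup>2 / (klein_r\<^sup>2 * (1 - (norm x)\<^sup>2)\<^sup>2)
         \<and> form_norm_sq alpha_F beta_F x < 1)
    \<and> randers_on DK FF alpha_F beta_F"
proof -
  have DK: "DK = ball 0 klein_r" unfolding DK_def by (auto simp: mem_ball_0)
  have "\<forall>x\<in>DK. \<forall>\<xi>. FF x \<xi> = alpha_F x \<xi> + beta_F x \<xi>"
    unfolding DK_def using FF_eq_alpha_F_add_beta_F by blast
  moreover have "\<forall>x\<in>DK. form_norm_sq alpha_F beta_F x
           = (norm x)\<^sup>2 * (1 - klein_r\<^sup>2)\<^sup>2 / (klein_r\<^sup>2 * (1 - (norm x)\<^sup>2)\<^sup>2)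
         \<and> form_norm_sq alpha_F beta_F x < 1"
    unfolding DK power2_norm_eq_inner
    using form_norm_sq_alpha_F_beta_F form_norm_sq_alpha_F_beta_F_less_one by blast
  ultimately show ?thesis
    unfolding randers_on_def DK
    using riemannian_on_alpha_F one_form_on_beta_F f_pot_has_derivative closed_form_on_beta_F
    by blast
qed

end
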